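(* Let $0<4\alpha\leq 1$, $0<2\beta\leq 1$, $1/2-\alpha/4\leq\gamma<1$, $K\geq 0$, and let $n\geq(42K+4)/(\alpha^{2}\beta)$. If $G$ is a graph of order $n$ with \[ \mu(G)>\gamma n-K/n\quad\text{and}\quad \delta(G)\leq(\gamma-\alpha)n, \] then there exists an induced subgraph $H$ of $G$ with $|H|\geq(1-\beta)n$ satisfying at least one of the following conditions: (i) $\mu(H)>\gamma(1+\beta\alpha/2)|H|$; (ii) $\mu(H)>\gamma|H|$ and $\delta(H)>(\gamma-\alpha)|H|$.
   Context: Graphs are finite and simple. $\mu(G)$ denotes the largest eigenvalue of the adjacency matrix of $G$, $|G|$ the number of vertices of $G$, and $\delta(G)$ the minimum degree of $G$. *)

theory Defs
  imports Complex_Main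
begin

definition graph :: "'a set \<Rightarrow> ('a \<Rightarrow> 'a \<Rightarrow> bool) \<Rightarrow> bool" where
  "graph V E \<longleftrightarrow> finite V \<and> (\<forall>u\<in>V. \<forall>v\<in>V. E u v \<longleftrightarrow> E v u) \<and> (\<forall>v\<in>V. \<not> E v v)"

text \<open>Eigenvalues of the adjacency matrix (indexed by V): lambda with A x = lambda x for
some nonzero x : V -> real. (A is real symmetric, so all eigenvalues are real and
admit real eigenvectors.)\<close>
definition adj_eigenvalue :: "'a set \<Rightarrow> ('a \<Rightarrow> 'a \<Rightarrow> bool) \<Rightarrow> real \<Rightarrow> bool" where
  "adj_eigenvalue V E lam \<longleftrightarrow>
     (\<exists>x :: 'a \<Rightarrow> real. (\<exists>v\<in>V. x v \<noteq> 0) \<and>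
        (\<forall>v\<in>V. (\<Sum>u\<in>{u\<in>V. E v u}. x u) = lam * x v))"

definition mu :: "'a set \<Rightarrow> ('a \<Rightarrow> 'a \<Rightarrow> bool) \<Rightarrow> real" where
  "mu V E = Max {lam. adj_eigenvalue V E lam}"

definition degree :: "'a set \<Rightarrow> ('a \<Rightarrow> 'a \<Rightarrow> bool) \<Rightarrow> 'a \<Rightarrow> nat" where
  "degree V E v = card {u\<in>V. E v u}"

definition min_degree :: "'a set \<Rightarrow> ('a \<Rightarrow> 'a \<Rightarrow> bool) \<Rightarrow> nat" where
  "min_degree V E = Min (degree V E ` V)"

end

theory Submission
  imports Defs "Jordan_Normal_Form.Char_Poly" "HOL-Analysis.Function_Topology" "HOL-Analysis.Convex"
begin

text \<open>
  Delete low-degree vertices one at a time. Let \<open>x\<close> be a unit eigenvector of the current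
  graph \<open>S\<close> (with \<open>k\<close> vertices) for its largest eigenvalue \<open>m\<close>. Restricting \<open>x\<close> to \<open>S - {w}\<close>
  in the Rayleigh quotient gives \<open>\<mu>(S - {w}) (1 - x\<^sub>w\<^sup>2) \<ge> m (1 - 2 x\<^sub>w\<^sup>2)\<close>. If \<open>S\<close> has a vertex
  \<open>u\<close> of degree at most \<open>(\<gamma> - \<alpha>) k\<close> while \<open>m \<ge> \<gamma> k - K/n\<close>, then Cauchy-Schwarz applied to
  \<open>m x\<^sub>u = \<Sum>\<^bsub>v \<sim> u\<^esub> x\<^sub>v\<close> forces some entry to satisfy \<open>x\<^sub>w\<^sup>2 \<le> (1 - \<alpha>)/k\<close>. As long as (i) fails,
  i.e. \<open>m \<le> \<gamma> (1 + \<beta>\<alpha>/2) k\<close>, deleting that \<open>w\<close> lowers \<open>\<mu>\<close> by at most \<open>\<gamma> - 5\<gamma>\<alpha>/8\<close>, while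
  \<open>\<gamma> |S|\<close> drops by exactly \<open>\<gamma>\<close>.

  Hence the excess \<open>\<mu>(S) - \<gamma> |S|\<close> grows by \<open>5\<gamma>\<alpha>/8\<close> per deletion, and once it is positive
  the failure of (ii) keeps supplying low-degree vertices. After \<open>\<lfloor>\<beta> n\<rfloor>\<close> deletions the excess
  exceeds \<open>\<gamma>\<beta>\<alpha> |S|/2\<close>, so (i) holds after all.
\<close>

section \<open>Adjacency operator and Rayleigh quotient\<close>

definition adj_apply :: "'a set \<Rightarrow> ('a \<Rightarrow> 'a \<Rightarrow> bool) \<Rightarrow> ('a \<Rightarrow> real) \<Rightarrow> 'a \<Rightarrow> real" where
  "adj_apply S E x v = (\<Sum>u\<in>{u\<in>S. E v u}. x u)"

definition quad_form :: "'a set \<Rightarrow> ('a \<Rightarrow> 'a \<Rightarrow> bool) \<Rightarrow> ('a \<Rightarrow> real) \<Rightarrow> real" where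
  "quad_form S E x = (\<Sum>v\<in>S. x v * adj_apply S E x v)"

definition sq_norm :: "'a set \<Rightarrow> ('a \<Rightarrow> real) \<Rightarrow> real" where
  "sq_norm S x = (\<Sum>v\<in>S. (x v)\<^sup>2)"

lemma graph_subset: "graph V E \<Longrightarrow> S \<subseteq> V \<Longrightarrow> graph S E"
  unfolding graph_def by (auto intro: finite_subset)

lemma finite_adj_eigenvalues:
  assumes "finite S"
  shows "finite {lam. adj_eigenvalue S E lam}"
proof -
  define n where "n = card S"
  obtain f where f: "bij_betw f {0..<n} S"
    using ex_bij_betw_nat_finite[OF assms] n_def by blast
  define A :: "real mat" where "A = mat n n (\<lambda>(i,j). if E (f i) (f j) then 1 else 0)"
  have A: "A \<in> carrier_mat n n" by (simp add: A_def)
  have "{lam. adj_eigenvalue S E lam} \<subseteq> {k. poly (char_poly A) k = 0}"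
  proof
    fix lam assume "lam \<in> {lam. adj_eigenvalue S E lam}"
    then obtain x where x0: "\<exists>v\<in>S. x v \<noteq> 0"
      and xe: "\<And>v. v\<in>S \<Longrightarrow> (\<Sum>u\<in>{u\<in>S. E v u}. x u) = lam * x v"
      unfolding adj_eigenvalue_def by auto
    define w where "w = vec n (\<lambda>i. x (f i))"
    have wc: "w \<in> carrier_vec n" by (simp add: w_def)
    have "w \<noteq> 0\<^sub>v n"
    proof
      assume h: "w = 0\<^sub>v n"
      from x0 obtain s where s: "s \<in> S" "x s \<noteq> 0" by blast
      then obtain i where i: "i < n" "f i = s" using f unfolding bij_betw_def by auto
      have "w $ i = 0" using h i by simp
      then show False using i s by (simp add: w_def)
    qed
    moreover have "A *\<^sub>v w = lam \<cdot>\<^sub>v w"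
    proof (rule eq_vecI)
      fix i assume i: "i < dim_vec (lam \<cdot>\<^sub>v w)"
      then have i: "i < n" by (simp add: w_def)
      have fi: "f i \<in> S" using f i unfolding bij_betw_def by auto
      have "(A *\<^sub>v w) $ i = (\<Sum>j<n. (if E (f i) (f j) then 1 else 0) * x (f j))"
        using i by (simp add: A_def w_def mult_mat_vec_def scalar_prod_def lessThan_atLeast0)
      also have "\<dots> = (\<Sum>j\<in>{0..<n}. (\<lambda>u. if E (f i) u then x u else 0) (f j))"
        by (simp add: lessThan_atLeast0, intro sum.cong, auto)
      also have "\<dots> = (\<Sum>u\<in>S. if E (f i) u then x u else 0)"
        using sum.reindex_bij_betw[OF f] by simp
      also have "\<dots> = (\<Sum>u\<in>{u\<in>S. E (f i) u}. x u)"
        using assms by (simp add: sum.inter_filter)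
      also have "\<dots> = lam * x (f i)" using xe fi by simp
      finally show "(A *\<^sub>v w) $ i = (lam \<cdot>\<^sub>v w) $ i" using i by (simp add: w_def)
    qed (simp add: A_def w_def)
    ultimately have "eigenvalue A lam"
      using wc A unfolding eigenvalue_def eigenvector_def by auto
    then show "lam \<in> {k. poly (char_poly A) k = 0}" using eigenvalue_root_char_poly[OF A] by simp
  qed
  moreover have "char_poly A \<noteq> 0" using degree_monic_char_poly[OF A] by auto
  ultimately show ?thesis using poly_roots_finite finite_subset by blast
qed

lemma adj_apply_eq_sum_if: "finite S \<Longrightarrow> adj_apply S E x v = (\<Sum>u\<in>S. if E v u then x u else 0)"
  unfolding adj_apply_def by (simp add: sum.inter_filter)

lemma adj_apply_add_scaled:
  "adj_apply S E (\<lambda>v. x v + t * r v) w = adj_apply S E x w + t * adj_apply S E r w"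
  unfolding adj_apply_def by (simp add: sum.distrib sum_distrib_left)

lemma adj_bilinear_form_commute:
  assumes "graph S E"
  shows "(\<Sum>v\<in>S. x v * adj_apply S E y v) = (\<Sum>v\<in>S. y v * adj_apply S E x v)"
proof -
  have fin: "finite S" and sym: "\<And>u v. u \<in> S \<Longrightarrow> v \<in> S \<Longrightarrow> E u v = E v u"
    using assms unfolding graph_def by auto
  have "(\<Sum>v\<in>S. x v * adj_apply S E y v) = (\<Sum>v\<in>S. \<Sum>u\<in>S. if E v u then x v * y u else 0)"
    by (simp add: adj_apply_eq_sum_if[OF fin] sum_distrib_left if_distrib cong: if_cong)
  also have "\<dots> = (\<Sum>u\<in>S. \<Sum>v\<in>S. if E v u then x v * y u else 0)"
    by (rule sum.swap)
  also have "\<dots> = (\<Sum>u\<in>S. \<Sum>v\<in>S. if E u v then y u * x v else 0)"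
    by (intro sum.cong refl) (auto simp: sym mult.commute)
  also have "\<dots> = (\<Sum>v\<in>S. y v * adj_apply S E x v)"
    by (simp add: adj_apply_eq_sum_if[OF fin] sum_distrib_left if_distrib cong: if_cong)
  finally show ?thesis .
qed

lemma quad_form_add_scaled:
  assumes "graph S E"
  shows "quad_form S E (\<lambda>v. x v + t * r v) =
    quad_form S E x + 2 * t * (\<Sum>v\<in>S. r v * adj_apply S E x v) + t\<^sup>2 * quad_form S E r"
proof -
  have "quad_form S E (\<lambda>v. x v + t * r v) =
      (\<Sum>v\<in>S. x v * adj_apply S E x v + t * (x v * adj_apply S E r v)
        + t * (r v * adj_apply S E x v) + t\<^sup>2 * (r v * adj_apply S E r v))"
    unfolding quad_form_def adj_apply_add_scaled
    by (intro sum.cong refl) (simp add: algebra_simps power2_eq_square)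
  also have "\<dots> = quad_form S E x + t * (\<Sum>v\<in>S. x v * adj_apply S E r v)
      + t * (\<Sum>v\<in>S. r v * adj_apply S E x v) + t\<^sup>2 * quad_form S E r"
    unfolding quad_form_def by (simp add: sum.distrib sum_distrib_left)
  finally show ?thesis using adj_bilinear_form_commute[OF assms, of x r] by simp
qed

lemma sq_norm_add_scaled:
  "sq_norm S (\<lambda>v. x v + t * r v) = sq_norm S x + 2 * t * (\<Sum>v\<in>S. x v * r v) + t\<^sup>2 * sq_norm S r"
proof -
  have "sq_norm S (\<lambda>v. x v + t * r v) = (\<Sum>v\<in>S. (x v)\<^sup>2 + 2 * t * (x v * r v) + t\<^sup>2 * (r v)\<^sup>2)"
    unfolding sq_norm_def by (intro sum.cong refl) (simp add: algebra_simps power2_eq_square)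
  then show ?thesis unfolding sq_norm_def by (simp add: sum.distrib sum_distrib_left)
qed

lemma quad_form_scale: "quad_form S E (\<lambda>v. c * x v) = c\<^sup>2 * quad_form S E x"
  unfolding quad_form_def adj_apply_def
  by (simp add: power2_eq_square algebra_simps flip: sum_distrib_left)

lemma sq_norm_scale: "sq_norm S (\<lambda>v. c * x v) = c\<^sup>2 * sq_norm S x"
  unfolding sq_norm_def by (simp add: sum_distrib_left power_mult_distrib)

lemma quad_form_cong: "(\<And>v. v \<in> S \<Longrightarrow> x v = y v) \<Longrightarrow> quad_form S E x = quad_form S E y"
  unfolding quad_form_def adj_apply_def by (intro sum.cong refl) auto

lemma sq_norm_cong: "(\<And>v. v \<in> S \<Longrightarrow> x v = y v) \<Longrightarrow> sq_norm S x = sq_norm S y"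
  unfolding sq_norm_def by (intro sum.cong refl) auto

lemma sq_norm_nonneg: "sq_norm S x \<ge> 0"
  unfolding sq_norm_def by (simp add: sum_nonneg)

lemma sq_norm_eq_0_imp: "finite S \<Longrightarrow> sq_norm S x = 0 \<Longrightarrow> v \<in> S \<Longrightarrow> x v = 0"
  unfolding sq_norm_def using sum_nonneg_eq_0_iff[of S "\<lambda>v. (x v)\<^sup>2"] by auto

lemma sq_norm_pos: "finite S \<Longrightarrow> v \<in> S \<Longrightarrow> x v \<noteq> 0 \<Longrightarrow> sq_norm S x > 0"
  using sq_norm_eq_0_imp[of S x v] sq_norm_nonneg[of S x] by force

lemma quad_form_eigenvector:
  "(\<And>v. v \<in> S \<Longrightarrow> adj_apply S E x v = m * x v) \<Longrightarrow> quad_form S E x = m * sq_norm S x"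
  unfolding quad_form_def sq_norm_def
  by (simp add: sum_distrib_left power2_eq_square algebra_simps)

lemma quad_form_maximizer_exists:
  assumes "graph S E" "S \<noteq> {}"
  shows "\<exists>x. sq_norm S x = 1 \<and> (\<forall>y. quad_form S E y \<le> quad_form S E x * sq_norm S y)"
proof -
  have fin: "finite S" using assms unfolding graph_def by auto
  define X where "X = (\<lambda>v. if v \<in> S then {-1..1::real} else {0})"
  define B where "B = PiE UNIV X \<inter> {x. sq_norm S x = 1}"
  have cont_sq_norm: "continuous_on A (sq_norm S)" for A
    unfolding sq_norm_def
    by (intro continuous_intros continuous_on_subset[OF continuous_on_product_coordinates]) auto
  have "compactin (product_topology (\<lambda>i. euclidean) UNIV) (PiE UNIV X)"
    by (subst compactin_PiE) (auto simp: X_def compactin_euclidean_iff)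
  then have "compact (PiE UNIV X)"
    by (simp add: euclidean_product_topology compactin_euclidean_iff)
  moreover have "closed {x. sq_norm S x = 1}"
    by (rule closed_Collect_eq) (auto intro: cont_sq_norm)
  ultimately have "compact B" unfolding B_def by (rule compact_Int_closed)
  moreover have "B \<noteq> {}"
  proof -
    obtain s where s: "s \<in> S" using assms by auto
    have "(\<Sum>v\<in>S. (if v = s then 1 else 0 :: real)\<^sup>2) = (\<Sum>v\<in>S. if v = s then 1 else 0)"
      by (intro sum.cong) auto
    then have "sq_norm S (\<lambda>v. if v = s then 1 else 0) = 1"
      unfolding sq_norm_def using s fin by simp
    then have "(\<lambda>v. if v = s then 1 else 0) \<in> B"
      unfolding B_def X_def using s by (auto simp: PiE_def extensional_def)
    then show ?thesis by auto
  qed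
  moreover have "continuous_on B (quad_form S E)"
    unfolding quad_form_def adj_apply_def
    by (intro continuous_intros continuous_on_subset[OF continuous_on_product_coordinates]) auto
  ultimately obtain x where xB: "x \<in> B" and xmax: "\<And>y. y \<in> B \<Longrightarrow> quad_form S E y \<le> quad_form S E x"
    using continuous_attains_sup by metis
  have "quad_form S E y \<le> quad_form S E x * sq_norm S y" for y
  proof (cases "sq_norm S y = 0")
    case True
    then have "quad_form S E y = quad_form S E (\<lambda>v. 0)"
      using sq_norm_eq_0_imp[OF fin] by (intro quad_form_cong) auto
    then show ?thesis using True by (simp add: quad_form_def)
  next
    case False
    then have np: "sq_norm S y > 0" using sq_norm_nonneg[of S y] by auto
    define c where "c = 1 / sqrt (sq_norm S y)"
    define z where "z = (\<lambda>v. if v \<in> S then c * y v else 0)"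
    have c2: "c\<^sup>2 * sq_norm S y = 1" using np by (simp add: c_def power_divide)
    have "sq_norm S z = 1"
      using sq_norm_cong[of S z "\<lambda>v. c * y v"] sq_norm_scale[of S c y] c2 by (simp add: z_def)
    moreover have "z v \<in> X v" for v
    proof (cases "v \<in> S")
      case True
      have "(y v)\<^sup>2 \<le> sq_norm S y"
        unfolding sq_norm_def using True fin by (intro member_le_sum) auto
      then have "c\<^sup>2 * (y v)\<^sup>2 \<le> c\<^sup>2 * sq_norm S y" by (intro mult_left_mono) auto
      then have "(z v)\<^sup>2 \<le> 1" using True c2 by (simp add: z_def power_mult_distrib)
      then have "\<bar>z v\<bar> \<le> 1" using abs_le_square_iff[of "z v" 1] by simp
      then show ?thesis using True by (simp add: X_def abs_le_iff)
    qed (simp add: X_def z_def)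
    ultimately have "quad_form S E z \<le> quad_form S E x"
      by (intro xmax) (auto simp: B_def PiE_def extensional_def)
    moreover have "quad_form S E z = c\<^sup>2 * quad_form S E y"
      using quad_form_cong[of S z "\<lambda>v. c * y v"] quad_form_scale[of S E c y] by (simp add: z_def)
    ultimately have "c\<^sup>2 * quad_form S E y * sq_norm S y \<le> quad_form S E x * sq_norm S y"
      using np by (intro mult_right_mono) auto
    moreover have "c\<^sup>2 * quad_form S E y * sq_norm S y = quad_form S E y"
      using c2 by (simp add: algebra_simps)
    ultimately show ?thesis by simp
  qed
  moreover have "sq_norm S x = 1" using xB unfolding B_def by auto
  ultimately show ?thesis by auto
qed

text \<open>First variation: perturbing the maximizer along its residual \<open>r = A x - \<lambda> x\<close> gains \<open>2 t |r|\<^sup>2\<close>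
  to first order, which is impossible unless \<open>r = 0\<close>.\<close>

lemma quad_form_maximizer_eigenvector:
  assumes g: "graph S E" and x1: "sq_norm S x = 1"
    and xmax: "\<And>y. quad_form S E y \<le> quad_form S E x * sq_norm S y"
    and v: "v \<in> S"
  shows "adj_apply S E x v = quad_form S E x * x v"
proof -
  have fin: "finite S" using g unfolding graph_def by auto
  define l where "l = quad_form S E x"
  define r where "r = (\<lambda>v. adj_apply S E x v - l * x v)"
  have residual: "(\<Sum>v\<in>S. r v * adj_apply S E x v) - l * (\<Sum>v\<in>S. x v * r v) = sq_norm S r"
    unfolding sq_norm_def r_def
    by (simp add: sum_distrib_left power2_eq_square algebra_simps flip: sum_subtractf)
  have variation: "2 * t * sq_norm S r \<le> t\<^sup>2 * (l * sq_norm S r - quad_form S E r)" for t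
  proof -
    have "quad_form S E (\<lambda>v. x v + t * r v) \<le> l * sq_norm S (\<lambda>v. x v + t * r v)"
      using xmax l_def by simp
    then have "l + 2 * t * (\<Sum>v\<in>S. r v * adj_apply S E x v) + t\<^sup>2 * quad_form S E r
        \<le> l * (1 + 2 * t * (\<Sum>v\<in>S. x v * r v) + t\<^sup>2 * sq_norm S r)"
      unfolding quad_form_add_scaled[OF g] sq_norm_add_scaled x1 l_def by simp
    then have "2 * t * ((\<Sum>v\<in>S. r v * adj_apply S E x v) - l * (\<Sum>v\<in>S. x v * r v))
        \<le> t\<^sup>2 * (l * sq_norm S r - quad_form S E r)"
      by (simp add: algebra_simps)
    then show ?thesis using residual by simp
  qed
  have "sq_norm S r = 0"
  proof (rule ccontr)
    assume "sq_norm S r \<noteq> 0"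
    then have np: "sq_norm S r > 0" using sq_norm_nonneg[of S r] by auto
    define D where "D = \<bar>l * sq_norm S r - quad_form S E r\<bar> + 1"
    define t where "t = sq_norm S r / D"
    have Dp: "D > 0" unfolding D_def by simp
    have tp: "t > 0" using np Dp unfolding t_def by simp
    have "2 * t * sq_norm S r \<le> t\<^sup>2 * (l * sq_norm S r - quad_form S E r)" by (rule variation)
    also have "\<dots> \<le> t\<^sup>2 * D" unfolding D_def by (intro mult_left_mono) auto
    also have "\<dots> = t * sq_norm S r" using Dp unfolding t_def by (simp add: power2_eq_square)
    finally show False using tp np by simp
  qed
  then show ?thesis using sq_norm_eq_0_imp[OF fin _ v, of r] unfolding r_def l_def by simp
qed

lemma mu_eq_quad_form_maximizer:
  assumes g: "graph S E" and x1: "sq_norm S x = 1"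
    and xmax: "\<And>y. quad_form S E y \<le> quad_form S E x * sq_norm S y"
  shows "mu S E = quad_form S E x"
proof -
  have fin: "finite S" using g unfolding graph_def by auto
  have "\<exists>v\<in>S. x v \<noteq> 0"
  proof (rule ccontr)
    assume "\<not> (\<exists>v\<in>S. x v \<noteq> 0)"
    then have "sq_norm S x = 0" unfolding sq_norm_def by simp
    then show False using x1 by simp
  qed
  then have "adj_eigenvalue S E (quad_form S E x)"
    using quad_form_maximizer_eigenvector[OF g x1 xmax]
    unfolding adj_eigenvalue_def adj_apply_def by blast
  moreover have "lam \<le> quad_form S E x" if "adj_eigenvalue S E lam" for lam
  proof -
    from that obtain y v where v: "v \<in> S" "y v \<noteq> 0"
      and ye: "\<And>w. w \<in> S \<Longrightarrow> adj_apply S E y w = lam * y w"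
      unfolding adj_eigenvalue_def adj_apply_def by blast
    have "lam * sq_norm S y \<le> quad_form S E x * sq_norm S y"
      using xmax[of y] quad_form_eigenvector[of S E y lam, OF ye] by simp
    then show ?thesis using sq_norm_pos[of S v y] fin v by simp
  qed
  ultimately show ?thesis
    unfolding mu_def by (intro Max_eqI finite_adj_eigenvalues fin) auto
qed

lemma quad_form_le_mu:
  assumes "graph S E" "S \<noteq> {}"
  shows "quad_form S E y \<le> mu S E * sq_norm S y"
proof -
  obtain x where "sq_norm S x = 1" "\<And>y. quad_form S E y \<le> quad_form S E x * sq_norm S y"
    using quad_form_maximizer_exists[OF assms] by blast
  then show ?thesis using mu_eq_quad_form_maximizer[OF assms(1)] by simp
qed

lemma mu_unit_eigenvector:
  assumes "graph S E" "S \<noteq> {}"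
  obtains x where "sq_norm S x = 1" "\<And>v. v \<in> S \<Longrightarrow> adj_apply S E x v = mu S E * x v"
proof -
  obtain x where "sq_norm S x = 1" "\<And>y. quad_form S E y \<le> quad_form S E x * sq_norm S y"
    using quad_form_maximizer_exists[OF assms] by blast
  then show ?thesis
    using that quad_form_maximizer_eigenvector[OF assms(1)] mu_eq_quad_form_maximizer[OF assms(1)]
    by simp
qed

section \<open>Deleting a vertex\<close>

lemma quad_form_remove_vertex:
  assumes g: "graph S E" and u: "u \<in> S"
  shows "quad_form S E x = quad_form (S - {u}) E x + 2 * x u * adj_apply S E x u"
proof -
  have fin: "finite S" and sym: "\<And>a b. a \<in> S \<Longrightarrow> b \<in> S \<Longrightarrow> E a b = E b a" and irr: "\<not> E u u"
    using g u unfolding graph_def by auto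
  have split: "adj_apply S E x v = adj_apply (S - {u}) E x v + (if E v u then x u else 0)" for v
    using fin u by (simp add: adj_apply_eq_sum_if sum.remove)
  have at_u: "adj_apply S E x u = (\<Sum>v\<in>S - {u}. if E u v then x v else 0)"
    using fin u irr by (simp add: adj_apply_eq_sum_if sum.remove)
  have "quad_form S E x = x u * adj_apply S E x u + (\<Sum>v\<in>S - {u}. x v * adj_apply S E x v)"
    unfolding quad_form_def using fin u by (simp add: sum.remove)
  also have "(\<Sum>v\<in>S - {u}. x v * adj_apply S E x v) =
      quad_form (S - {u}) E x + (\<Sum>v\<in>S - {u}. x v * (if E v u then x u else 0))"
    unfolding quad_form_def split by (simp add: algebra_simps sum.distrib)
  also have "(\<Sum>v\<in>S - {u}. x v * (if E v u then x u else 0)) = x u * adj_apply S E x u"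
    unfolding at_u sum_distrib_left using u by (intro sum.cong refl) (auto simp: sym)
  finally show ?thesis by simp
qed

lemma sq_norm_remove_vertex: "finite S \<Longrightarrow> u \<in> S \<Longrightarrow> sq_norm S x = sq_norm (S - {u}) x + (x u)\<^sup>2"
  unfolding sq_norm_def by (simp add: sum.remove)

lemma mu_remove_vertex_lower_bound:
  assumes g: "graph S E" and u: "u \<in> S" and ne: "S - {u} \<noteq> {}"
    and x1: "sq_norm S x = 1" and ev: "\<And>v. v \<in> S \<Longrightarrow> adj_apply S E x v = m * x v"
  shows "mu (S - {u}) E * (1 - (x u)\<^sup>2) \<ge> m * (1 - 2 * (x u)\<^sup>2)"
proof -
  have fin: "finite S" using g unfolding graph_def by auto
  have "quad_form S E x = m" using quad_form_eigenvector[of S E x m, OF ev] x1 by simp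
  then have "quad_form (S - {u}) E x = m * (1 - 2 * (x u)\<^sup>2)"
    using quad_form_remove_vertex[OF g u, of x] ev[OF u] by (simp add: power2_eq_square algebra_simps)
  moreover have "sq_norm (S - {u}) x = 1 - (x u)\<^sup>2"
    using sq_norm_remove_vertex[OF fin u, of x] x1 by simp
  ultimately show ?thesis
    using quad_form_le_mu[OF graph_subset[OF g] ne, of x] by auto
qed

section \<open>Deleting a low-degree vertex\<close>

lemma low_degree_product_bound:
  fixes m k c d a g :: real
  assumes "m \<ge> g * k - c" "g * k - c \<ge> 0" "0 \<le> d" "d \<le> (g - a) * k"
    "0 < a" "a \<le> 1/4" "a \<le> g" "4 * c \<le> k * a" "c \<ge> 0" "k > 0"
  shows "d * (a * k + (1 - a) * d) \<le> (1 - a) * m\<^sup>2"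
proof -
  have "d * (a * k + (1 - a) * d) \<le> ((g - a) * k) * (a * k + (1 - a) * ((g - a) * k))"
    using assms by (intro mult_mono add_left_mono mult_left_mono) auto
  also have "\<dots> = (1 - a) * (g\<^sup>2 * k\<^sup>2) - k\<^sup>2 * a * (g * (1 - 2 * a) + a\<^sup>2)"
    by (simp add: algebra_simps power2_eq_square)
  also have "\<dots> \<le> (1 - a) * (g\<^sup>2 * k\<^sup>2) - (1 - a) * 2 * g * k * c"
  proof -
    have "(1 - a) * (g * k * c) \<le> g * k * c" using assms by (intro mult_left_le_one_le) auto
    moreover have "g * k * c \<le> g * k * (k * a / 4)" using assms by (intro mult_left_mono) auto
    moreover have "k * k * a * g * (1/2) \<le> k * k * a * g * (1 - 2 * a)"
      using assms by (intro mult_left_mono) auto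
    moreover have "0 \<le> k * k * a * a * a" using assms by simp
    moreover have "k\<^sup>2 * a * (g * (1 - 2 * a) + a\<^sup>2) = k * k * a * g * (1 - 2 * a) + k * k * a * a * a"
      by (simp add: power2_eq_square algebra_simps)
    ultimately show ?thesis by (simp add: algebra_simps)
  qed
  also have "\<dots> \<le> (1 - a) * (g * k - c)\<^sup>2"
  proof -
    have "g\<^sup>2 * k\<^sup>2 - 2 * g * k * c \<le> (g * k - c)\<^sup>2" by (simp add: power2_eq_square algebra_simps)
    then have "(1 - a) * (g\<^sup>2 * k\<^sup>2 - 2 * g * k * c) \<le> (1 - a) * (g * k - c)\<^sup>2"
      using assms by (intro mult_left_mono) auto
    then show ?thesis by (simp add: algebra_simps)
  qed
  also have "\<dots> \<le> (1 - a) * m\<^sup>2" using assms by (intro mult_left_mono power_mono) auto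
  finally show ?thesis .
qed

lemma small_eigenvector_entry:
  assumes g: "graph S E" and k: "k = real (card S)" and kp: "k > 0"
    and x1: "sq_norm S x = 1" and ev: "\<And>v. v \<in> S \<Longrightarrow> adj_apply S E x v = m * x v"
    and u: "u \<in> S" and du: "real (Defs.degree S E u) \<le> (g - a) * k"
    and h: "m \<ge> g * k - c" "g * k - c > 0" "0 < a" "a \<le> 1/4" "a \<le> g" "4 * c \<le> k * a" "c \<ge> 0"
  shows "\<exists>w\<in>S. (x w)\<^sup>2 \<le> (1 - a) / k"
proof (rule ccontr)
  assume "\<not> ?thesis"
  then have big: "\<And>w. w \<in> S \<Longrightarrow> (x w)\<^sup>2 > (1 - a) / k" by force
  have fin: "finite S" using g unfolding graph_def by auto
  define N where "N = {w\<in>S. E u w}"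
  define d where "d = real (card N)"
  have NS: "N \<subseteq> S" unfolding N_def by auto
  have "real (card (S - N)) = k - d"
    using card_Diff_subset[OF finite_subset[OF NS fin] NS] card_mono[OF fin NS]
    unfolding k d_def by (simp add: of_nat_diff)
  then have "(\<Sum>w\<in>S - N. (x w)\<^sup>2) \<ge> (k - d) * ((1 - a) / k)"
    using big sum_bounded_below[of "S - N" "(1 - a) / k" "\<lambda>w. (x w)\<^sup>2"] by (auto intro: less_imp_le)
  moreover have "sq_norm S x = (\<Sum>w\<in>N. (x w)\<^sup>2) + (\<Sum>w\<in>S - N. (x w)\<^sup>2)"
    unfolding sq_norm_def using sum.subset_diff[OF NS fin] by (simp add: add.commute)
  ultimately have "(\<Sum>w\<in>N. (x w)\<^sup>2) \<le> 1 - (k - d) * ((1 - a) / k)"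
    using x1 by linarith
  then have "(\<Sum>w\<in>N. (x w)\<^sup>2) * d \<le> (1 - (k - d) * ((1 - a) / k)) * d"
    by (rule mult_right_mono) (simp add: d_def)
  moreover have "(m * x u)\<^sup>2 \<le> (\<Sum>w\<in>N. (x w)\<^sup>2) * d"
    using ev[OF u] sum_squared_le_sum_of_squares[of x N] unfolding adj_apply_def N_def d_def by simp
  ultimately have "(m * x u)\<^sup>2 \<le> (1 - (k - d) * ((1 - a) / k)) * d" by linarith
  moreover have "m\<^sup>2 * ((1 - a) / k) < (m * x u)\<^sup>2"
    using mult_strict_left_mono[OF big[OF u], of "m\<^sup>2"] h by (simp add: power_mult_distrib)
  ultimately have "m\<^sup>2 * ((1 - a) / k) * k < (1 - (k - d) * ((1 - a) / k)) * d * k"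
    using kp by (intro mult_strict_right_mono) auto
  moreover have "m\<^sup>2 * ((1 - a) / k) * k = (1 - a) * m\<^sup>2" using kp by simp
  moreover have "(1 - (k - d) * ((1 - a) / k)) * d * k = d * (a * k + (1 - a) * d)"
    using kp by (simp add: field_simps)
  ultimately have "(1 - a) * m\<^sup>2 < d * (a * k + (1 - a) * d)" by linarith
  moreover have "d * (a * k + (1 - a) * d) \<le> (1 - a) * m\<^sup>2"
    using h du kp unfolding d_def N_def Defs.degree_def
    by (intro low_degree_product_bound[of g k c m _ a]) auto
  ultimately show False by linarith
qed

lemma remove_vertex_loss_bound:
  fixes m m' k s a g :: real
  assumes "m \<ge> 0" "m \<le> g * (1 + a/4) * k" "0 < a" "a \<le> 1/4" "g > 0"
    "8 \<le> k * a" "0 \<le> s" "s \<le> (1 - a) / k" "m' * (1 - s) \<ge> m * (1 - 2 * s)"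
  shows "m' \<ge> m - g + 5 * g * a / 8"
proof -
  have kp: "k > 0" using assms by (smt (verit) mult_nonpos_nonneg)
  have k32: "k \<ge> 32" using assms mult_left_mono[of a "1/4" k] kp by linarith
  have sk: "s * k \<le> 1 - a" using assms kp by (simp add: field_simps)
  have s1: "s < 1" using sk assms k32 mult_left_mono[of 1 k s] by linarith
  have B: "k - 1 + a > 0" using k32 assms by linarith
  have "m' \<ge> m - m * (s / (1 - s))"
  proof -
    have "m' \<ge> m * (1 - 2 * s) / (1 - s)" using assms s1 by (simp add: field_simps)
    moreover have "m * (1 - 2 * s) / (1 - s) = m - m * (s / (1 - s))" using s1 by (simp add: field_simps)
    ultimately show ?thesis by simp
  qed
  moreover have "m * (s / (1 - s)) \<le> m * ((1 - a) / (k - 1 + a))"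
  proof -
    have "s * (k - 1 + a) \<le> (1 - a) * (1 - s)" using sk by (simp add: algebra_simps)
    then have "s / (1 - s) \<le> (1 - a) / (k - 1 + a)" using s1 B by (simp add: field_simps)
    then show ?thesis using assms by (intro mult_left_mono) auto
  qed
  moreover have "m * ((1 - a) / (k - 1 + a)) \<le> g * (1 - 5 * a / 8)"
  proof -
    have "m * (1 - a) \<le> g * k * ((1 + a/4) * (1 - a))"
      using assms mult_right_mono[of m "g * (1 + a/4) * k" "1 - a"] by (simp add: algebra_simps)
    also have "\<dots> \<le> g * k * (1 - 3 * a / 4)"
      using assms kp by (intro mult_left_mono) (auto simp: algebra_simps)
    also have "\<dots> \<le> g * ((1 - 5 * a / 8) * (k - 1 + a))"
    proof -
      have "a * a \<le> a" using mult_left_mono[of a 1 a] assms by simp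
      moreover have "8 \<le> a * k" using assms(6) by (simp add: mult.commute)
      ultimately have "8 + 5 * (a * a) - 13 * a - a * k \<le> 0" using assms(3) by linarith
      moreover have "k * (1 - 3 * a / 4) - (1 - 5 * a / 8) * (k - 1 + a) =
          (8 + 5 * (a * a) - 13 * a - a * k) / 8"
        by (simp add: field_simps)
      ultimately have "k * (1 - 3 * a / 4) \<le> (1 - 5 * a / 8) * (k - 1 + a)"
        by (smt (verit) divide_nonpos_pos)
      then show ?thesis using assms by (simp add: mult_left_mono mult.assoc)
    qed
    finally have "m * (1 - a) \<le> g * (1 - 5 * a / 8) * (k - 1 + a)" by (simp add: mult.assoc)
    then show ?thesis using B by (simp add: field_simps)
  qed
  ultimately show ?thesis by (simp add: algebra_simps)
qed

lemma mu_remove_low_degree_vertex: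
  assumes g: "graph S E" and k: "k = real (card S)"
    and u: "u \<in> S" and du: "real (Defs.degree S E u) \<le> (g - a) * k"
    and lower: "mu S E \<ge> g * k - c" "g * k - c > 0" and upper: "mu S E \<le> g * (1 + a/4) * k"
    and a: "0 < a" "a \<le> 1/4" "a \<le> g" and c: "c \<ge> 0" "4 * c \<le> k * a" and ka: "8 \<le> k * a"
  shows "\<exists>w\<in>S. mu (S - {w}) E \<ge> mu S E - g + 5 * g * a / 8"
proof -
  have kp: "k > 0" using ka a by (smt (verit) mult_nonpos_nonneg)
  have "k \<ge> 32" using ka a mult_left_mono[of a "1/4" k] kp by linarith
  have ne: "S \<noteq> {}" using u by auto
  obtain x where x1: "sq_norm S x = 1" and ev: "\<And>v. v \<in> S \<Longrightarrow> adj_apply S E x v = mu S E * x v"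
    using mu_unit_eigenvector[OF g ne] by blast
  obtain w where w: "w \<in> S" and xw: "(x w)\<^sup>2 \<le> (1 - a) / k"
    using small_eigenvector_entry[OF g k kp x1 ev u du lower a(1,2,3) c(2,1)] by blast
  have "S - {w} \<noteq> {}"
  proof
    assume "S - {w} = {}"
    then have "card S \<le> 1" using card_mono[of "{w}" S] by auto
    then show False using k \<open>k \<ge> 32\<close> by linarith
  qed
  then have "mu (S - {w}) E * (1 - (x w)\<^sup>2) \<ge> mu S E * (1 - 2 * (x w)\<^sup>2)"
    using mu_remove_vertex_lower_bound[OF g w _ x1 ev] by blast
  then have "mu (S - {w}) E \<ge> mu S E - g + 5 * g * a / 8"
    using lower upper a ka xw by (intro remove_vertex_loss_bound[of "mu S E" g a k "(x w)\<^sup>2"]) auto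
  then show ?thesis using w by blast
qed

section \<open>The deletion process\<close>

lemma large_order_bounds:
  fixes \<alpha> \<beta> K n :: real
  assumes "0 < \<alpha>" "\<alpha> \<le> 1/4" "0 < \<beta>" "\<beta> \<le> 1/2" "K \<ge> 0" "n \<ge> (42 * K + 4) / (\<alpha>\<^sup>2 * \<beta>)"
  shows "n > 0" "64 \<le> \<beta> * n" "32 \<le> \<alpha> * n" "336 * (K / n) \<le> \<alpha>"
proof -
  have pos: "\<alpha> * \<alpha> * \<beta> > 0" using assms by simp
  then have main: "42 * K + 4 \<le> \<alpha> * \<alpha> * \<beta> * n"
    using assms(6) by (simp add: pos_divide_le_eq mult.commute power2_eq_square mult.left_commute)
  then have "0 < (\<alpha> * \<alpha> * \<beta>) * n" using assms(5) by linarith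
  then show n: "n > 0" using pos by (simp add: zero_less_mult_iff)
  have "\<alpha> * \<alpha> \<le> 1/4 * (1/4)" using assms by (intro mult_mono) auto
  then have "\<alpha> * \<alpha> * (\<beta> * n) \<le> 1/16 * (\<beta> * n)" using assms n by (intro mult_right_mono) auto
  then show "64 \<le> \<beta> * n" using main assms(5) by (simp add: mult.assoc)
  have "\<alpha> * \<beta> \<le> 1/4 * (1/2)" using assms by (intro mult_mono) auto
  then have ab: "\<alpha> * \<beta> * (\<alpha> * n) \<le> 1/8 * (\<alpha> * n)" using assms n by (intro mult_right_mono) auto
  moreover have reorder: "\<alpha> * \<alpha> * \<beta> * n = \<alpha> * \<beta> * (\<alpha> * n)" by simp
  ultimately show "32 \<le> \<alpha> * n" using main assms(5) by linarith
  have "42 * K \<le> 1/8 * (\<alpha> * n)" using main ab reorder by linarith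
  then show "336 * (K / n) \<le> \<alpha>" using n by (simp add: field_simps)
qed

text \<open>The parameter \<open>c\<close> stands for \<open>K/n\<close>.\<close>

locale vertex_deletion =
  fixes V :: "'a set" and E :: "'a \<Rightarrow> 'a \<Rightarrow> bool" and \<alpha> \<beta> \<gamma> c :: real
  assumes graph: "graph V E"
    and alpha: "0 < \<alpha>" "\<alpha> \<le> 1/4" and beta: "0 < \<beta>" "\<beta> \<le> 1/2"
    and gamma: "1/2 - \<alpha>/4 \<le> \<gamma>"
    and c: "0 \<le> c" "336 * c \<le> \<alpha>"
    and large: "64 \<le> \<beta> * real (card V)" "32 \<le> \<alpha> * real (card V)"
begin

abbreviation "n \<equiv> real (card V)"

definition gain :: real where "gain = 5 * \<gamma> * \<alpha> / 8"

definition desired_subgraph :: "'a set \<Rightarrow> bool" where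
  "desired_subgraph S \<longleftrightarrow> real (card S) \<ge> (1 - \<beta>) * n \<and>
     (mu S E > \<gamma> * (1 + \<beta> * \<alpha> / 2) * real (card S) \<or>
      (mu S E > \<gamma> * real (card S) \<and> real (min_degree S E) > (\<gamma> - \<alpha>) * real (card S)))"

lemma gamma_ge_7_16: "\<gamma> \<ge> 7/16"
  using gamma alpha by linarith

lemma c_less_gain: "c < gain"
  using gamma_ge_7_16 alpha c mult_right_mono[of "7/16" \<gamma> \<alpha>] unfolding gain_def by linarith

lemma deletion_step:
  assumes S: "S \<subseteq> V" "card S + t = card V" and t: "real t + 1 \<le> \<beta> * n"
    and not_desired: "\<not> desired_subgraph S"
    and lower: "mu S E \<ge> \<gamma> * real (card S) - c"
    and min_deg: "real (min_degree S E) \<le> (\<gamma> - \<alpha>) * real (card S)"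
  shows "\<exists>w\<in>S. mu (S - {w}) E \<ge> mu S E - \<gamma> + gain"
proof -
  define k where "k = real (card S)"
  have gS: "graph S E" using graph_subset[OF graph S(1)] .
  have fin: "finite S" using gS unfolding graph_def by auto
  have size: "k \<ge> (1 - \<beta>) * n + 1" using S(2) t unfolding k_def by (simp add: algebra_simps)
  have "\<beta> * n \<le> n / 2" using beta mult_right_mono[of \<beta> "1/2" n] by simp
  then have "n / 2 \<le> k" using size by (simp add: algebra_simps)
  then have "n / 2 * \<alpha> \<le> k * \<alpha>" using alpha by (intro mult_right_mono) auto
  then have "k * \<alpha> \<ge> 16" using large(2) by (simp add: mult.commute)
  moreover have "k \<ge> 64"
    using \<open>k * \<alpha> \<ge> 16\<close> alpha mult_left_mono[of \<alpha> "1/4" k] unfolding k_def by simp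
  moreover have "7/16 * k \<le> \<gamma> * k" using gamma_ge_7_16 \<open>k \<ge> 64\<close> by (intro mult_right_mono) auto
  ultimately have "\<gamma> * k - c > 0" using c alpha by linarith
  have "mu S E \<le> \<gamma> * (1 + \<beta> * \<alpha> / 2) * k"
    using not_desired size unfolding desired_subgraph_def k_def by auto
  also have "\<dots> \<le> \<gamma> * (1 + \<alpha> / 4) * k"
    using beta alpha gamma_ge_7_16 \<open>k \<ge> 64\<close> by (intro mult_right_mono mult_left_mono) auto
  finally have upper: "mu S E \<le> \<gamma> * (1 + \<alpha> / 4) * k" .
  have "S \<noteq> {}" using \<open>k \<ge> 64\<close> unfolding k_def by auto
  then have "min_degree S E \<in> Defs.degree S E ` S"
    unfolding min_degree_def using fin by (intro Min_in) auto
  then obtain u where "u \<in> S" "real (Defs.degree S E u) \<le> (\<gamma> - \<alpha>) * k"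
    using min_deg unfolding k_def by auto
  then show ?thesis
    using mu_remove_low_degree_vertex[OF gS k_def _ _ _ _ upper] lower \<open>\<gamma> * k - c > 0\<close>
      alpha gamma_ge_7_16 c \<open>k * \<alpha> \<ge> 16\<close> unfolding gain_def k_def by auto
qed

lemma deletion_sequence:
  assumes none: "\<forall>S\<subseteq>V. \<not> desired_subgraph S"
    and mu_V: "mu V E \<ge> \<gamma> * n - c" and min_deg_V: "real (min_degree V E) \<le> (\<gamma> - \<alpha>) * n"
    and t: "real t \<le> \<beta> * n"
  shows "\<exists>S\<subseteq>V. card S + t = card V \<and> mu S E \<ge> \<gamma> * real (card S) - c + real t * gain
           \<and> real (min_degree S E) \<le> (\<gamma> - \<alpha>) * real (card S)"
  using t
proof (induction t)
  case 0
  then show ?case using mu_V min_deg_V by auto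
next
  case (Suc t)
  then have t: "real t + 1 \<le> \<beta> * n" by simp
  with Suc.IH obtain S where S: "S \<subseteq> V" "card S + t = card V"
    and mu_S: "mu S E \<ge> \<gamma> * real (card S) - c + real t * gain"
    and min_deg: "real (min_degree S E) \<le> (\<gamma> - \<alpha>) * real (card S)"
    by auto
  have gain_pos: "gain > 0" using c c_less_gain by linarith
  then have t_gain: "real t * gain \<ge> 0" by simp
  have "\<not> desired_subgraph S" using none S(1) by blast
  moreover have "mu S E \<ge> \<gamma> * real (card S) - c" using mu_S t_gain by linarith
  ultimately obtain w where w: "w \<in> S" and mu_w: "mu (S - {w}) E \<ge> mu S E - \<gamma> + gain"
    using deletion_step[OF S t _ _ min_deg] by blast
  define S' where "S' = S - {w}"
  have "finite S" using finite_subset[OF S(1)] graph unfolding graph_def by blast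
  then have card_S': "card S = Suc (card S')"
    using card_Suc_Diff1[OF _ w] unfolding S'_def by simp
  then have S'_card: "card S' + Suc t = card V" using S(2) by simp
  have "\<gamma> * real (card S) = \<gamma> * real (card S') + \<gamma>" "real (Suc t) * gain = real t * gain + gain"
    using card_S' by (simp_all add: algebra_simps)
  then have mu_S': "mu S' E \<ge> \<gamma> * real (card S') - c + real (Suc t) * gain"
    using mu_S mu_w unfolding S'_def by linarith
  moreover have "real (min_degree S' E) \<le> (\<gamma> - \<alpha>) * real (card S')"
  proof -
    have "real (card S') + real t + 1 = n" using S'_card by (simp flip: of_nat_Suc of_nat_add)
    then have "real (card S') \<ge> (1 - \<beta>) * n" using t by (simp add: algebra_simps)
    moreover have "mu S' E > \<gamma> * real (card S')"
      using mu_S' \<open>real (Suc t) * gain = _\<close> t_gain c_less_gain by linarith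
    moreover have "\<not> desired_subgraph S'" using none S(1) unfolding S'_def by blast
    ultimately show ?thesis unfolding desired_subgraph_def by auto
  qed
  ultimately show ?case using S(1) S'_card unfolding S'_def by blast
qed

lemma desired_subgraph_exists:
  assumes mu_V: "mu V E \<ge> \<gamma> * n - c" and min_deg_V: "real (min_degree V E) \<le> (\<gamma> - \<alpha>) * n"
  shows "\<exists>S\<subseteq>V. desired_subgraph S"
proof (rule ccontr)
  assume none: "\<not> ?thesis"
  define T where "T = nat \<lfloor>\<beta> * n\<rfloor>"
  have T: "real T \<le> \<beta> * n" "\<beta> * n - 1 < real T"
    unfolding T_def using beta large by linarith+
  then obtain S where S: "S \<subseteq> V" "card S + T = card V"
    and mu_S: "mu S E \<ge> \<gamma> * real (card S) - c + real T * gain"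
    using deletion_sequence[OF _ mu_V min_deg_V] none by blast
  define P where "P = \<gamma> * \<alpha>"
  have P: "P > 0" using gamma_ge_7_16 alpha unfolding P_def by simp
  have "real (card S) \<le> n" using S(2) by linarith
  then have "P * \<beta> / 2 * real (card S) \<le> P * \<beta> / 2 * n"
    using P beta by (intro mult_left_mono) auto
  then have "\<gamma> * (1 + \<beta> * \<alpha> / 2) * real (card S) \<le> \<gamma> * real (card S) + P * \<beta> / 2 * n"
    unfolding P_def by (simp add: algebra_simps)
  also have "\<dots> < \<gamma> * real (card S) - c + real T * gain"
  proof -
    have "(\<beta> * n - 1) * P \<le> real T * P" using T P by (intro mult_right_mono) auto
    then have "\<beta> * n * P - P \<le> real T * P" by (simp add: algebra_simps)
    moreover have "64 * P \<le> \<beta> * n * P" using large P by (intro mult_right_mono) auto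
    moreover have "c < 5/8 * P" "real T * gain = 5/8 * (real T * P)"
      using c_less_gain unfolding gain_def P_def by auto
    moreover have "P * \<beta> / 2 * n = \<beta> * n * P / 2" by simp
    ultimately show ?thesis using P by linarith
  qed
  finally have "desired_subgraph S"
    using mu_S S(2) T unfolding desired_subgraph_def by (simp add: algebra_simps flip: of_nat_add)
  then show False using none S(1) by blast
qed

end

theorem theorem3:
  fixes V :: "'a set" and E :: "'a \<Rightarrow> 'a \<Rightarrow> bool"
    and \<alpha> \<beta> \<gamma> K :: real
  assumes "0 < 4 * \<alpha>" and "4 * \<alpha> \<le> 1"
    and "0 < 2 * \<beta>" and "2 * \<beta> \<le> 1"
    and "1/2 - \<alpha>/4 \<le> \<gamma>" and "\<gamma> < 1"
    and "K \<ge> 0"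
    and "graph V E"
    and "real (card V) \<ge> (42 * K + 4) / (\<alpha>^2 * \<beta>)"
    and "mu V E > \<gamma> * real (card V) - K / real (card V)"
    and "real (min_degree V E) \<le> (\<gamma> - \<alpha>) * real (card V)"
  shows "\<exists>S \<subseteq> V. real (card S) \<ge> (1 - \<beta>) * real (card V) \<and>
           (mu S E > \<gamma> * (1 + \<beta> * \<alpha> / 2) * real (card S) \<or>
            (mu S E > \<gamma> * real (card S) \<and>
             real (min_degree S E) > (\<gamma> - \<alpha>) * real (card S)))"
proof -
  note bounds = large_order_bounds[of \<alpha> \<beta> K "real (card V)"]
  interpret vertex_deletion V E \<alpha> \<beta> \<gamma> "K / real (card V)"
    using assms bounds by unfold_locales auto
  show ?thesis
    using desired_subgraph_exists assms(10,11) unfolding desired_subgraph_def by fastforce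
qed

end
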